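(* Let $V=\{1,\dots,N\}$, $V^{\mathrm{abs}}=\{0,N+1\}$, $V^*=V\cup V^{\mathrm{abs}}$, and let $\{\eta(t),t\ge0\}$ be a consistent configuration process on $V^*$ with generator $\mathcal L^{\mathrm{abs}}=\mathcal L+\mathcal H$. For $\eta\in\Omega^*$ and $z\ge0$ let $G(\eta,z):=\mathbb E_\eta[z^{\eta_0(\infty)}]$. Then for all $n$ and all $\eta\in\Omega^*_n$, $$(1-z)\,\partial_zG(\eta,z)+nG(\eta,z)=\sum_{i\in V^*}\eta_iG(\eta-\delta_i,z),$$ and consequently, for $z\in[0,1)$, $$G(\eta,z)=(1-z)^nG(\eta,0)+(1-z)^n\sum_{i\in V^*}\eta_i\int_0^z\frac{G(\eta-\delta_i,u)}{(1-u)^{n+1}}\,du.$$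
   Context: Rates $r(i,j)\ge0$ for $i\in V$, $j\in\{0,N+1\}$. $\mathcal L$ generates a configuration process on $V$ (single-site space $\Lambda\subseteq\mathbb N_0$), acting only on $(\eta_i)_{i\in V}$; $\mathcal Hf(\eta)=\sum_{i\in V,j\in V^{\mathrm{abs}}}r(i,j)\eta_i[f(\eta-\delta_i+\delta_j)-f(\eta)]$. $\Omega^*_n$ is the set of configurations on $V^*$ with $n$ particles, $\Omega^*=\bigcup_n\Omega^*_n$. Consistency: $[\mathcal L^{\mathrm{abs}},\mathcal A]=0$, $\mathcal Af(\eta)=\sum_{x\in V^*}\eta_xf(\eta-\delta_x)$ (terms with $\eta_x=0$ vanish). $\eta_0(\infty)$ is the number of particles eventually absorbed at $0$; expectations at time $\infty$ are limits as $t\to\infty$; $G(\eta,0):=\lim_{z\to0}G(\eta,z)=\mathbb P_\eta(\eta_0(\infty)=0)$. *)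

theory Defs
  imports "HOL-Analysis.Analysis"
begin

type_synonym config = "nat \<Rightarrow> nat"

definition sites_V :: "nat \<Rightarrow> nat set" where
  "sites_V N = {1..N}"

definition sites_abs :: "nat \<Rightarrow> nat set" where
  "sites_abs N = {0, N+1}"

definition sites_star :: "nat \<Rightarrow> nat set" where
  "sites_star N = {0..N+1}"

definition nparticles :: "nat \<Rightarrow> config \<Rightarrow> nat" where
  "nparticles N \<eta> = (\<Sum>x\<in>sites_star N. \<eta> x)"

text \<open>Omega*_n: configurations on V* (single-site space Lambda on V, N_0 on the absorbing
  sites, no particles outside V*) with n particles.\<close>
definition Omega_star :: "nat set \<Rightarrow> nat \<Rightarrow> nat \<Rightarrow> config set" where
  "Omega_star \<Lambda> N n = {\<eta>. (\<forall>x. x \<notin> sites_star N \<longrightarrow> \<eta> x = 0)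
        \<and> (\<forall>i\<in>sites_V N. \<eta> i \<in> \<Lambda>) \<and> nparticles N \<eta> = n}"

definition Omega_star_all :: "nat set \<Rightarrow> nat \<Rightarrow> config set" where
  "Omega_star_all \<Lambda> N = (\<Union>n. Omega_star \<Lambda> N n)"

definition Omega_V :: "nat set \<Rightarrow> nat \<Rightarrow> nat \<Rightarrow> config set" where
  "Omega_V \<Lambda> N m = {\<zeta>. (\<forall>x. x \<notin> sites_V N \<longrightarrow> \<zeta> x = 0)
        \<and> (\<forall>i\<in>sites_V N. \<zeta> i \<in> \<Lambda>) \<and> (\<Sum>i\<in>sites_V N. \<zeta> i) = m}"

definition restrV :: "nat \<Rightarrow> config \<Rightarrow> config" where
  "restrV N \<eta> = (\<lambda>x. if x \<in> sites_V N then \<eta> x else 0)"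

definition embedV :: "nat \<Rightarrow> config \<Rightarrow> config \<Rightarrow> config" where
  "embedV N \<zeta> \<eta> = (\<lambda>x. if x \<in> sites_V N then \<zeta> x else \<eta> x)"

text \<open>Generator L of a (particle-conserving) configuration process on V with transition
  rates c(\<zeta>0,\<zeta>) between configurations on V, acting only on the V-coordinates.\<close>
definition genL :: "nat set \<Rightarrow> nat \<Rightarrow> (config \<Rightarrow> config \<Rightarrow> real)
    \<Rightarrow> (config \<Rightarrow> real) \<Rightarrow> config \<Rightarrow> real" where
  "genL \<Lambda> N c f \<eta> =
     (\<Sum>\<zeta>\<in>Omega_V \<Lambda> N (\<Sum>i\<in>sites_V N. \<eta> i).
        c (restrV N \<eta>) \<zeta> * (f (embedV N \<zeta> \<eta>) - f \<eta>))"

definition removeP :: "nat \<Rightarrow> config \<Rightarrow> config" where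
  "removeP x \<eta> = \<eta>(x := \<eta> x - 1)"

definition moveP :: "nat \<Rightarrow> nat \<Rightarrow> config \<Rightarrow> config" where
  "moveP i j \<eta> = (removeP i \<eta>)(j := removeP i \<eta> j + 1)"

definition genH :: "nat \<Rightarrow> (nat \<Rightarrow> nat \<Rightarrow> real) \<Rightarrow> (config \<Rightarrow> real) \<Rightarrow> config \<Rightarrow> real" where
  "genH N r f \<eta> = (\<Sum>i\<in>sites_V N. \<Sum>j\<in>sites_abs N.
       r i j * real (\<eta> i) * (f (moveP i j \<eta>) - f \<eta>))"

definition genLabs :: "nat set \<Rightarrow> nat \<Rightarrow> (config \<Rightarrow> config \<Rightarrow> real) \<Rightarrow> (nat \<Rightarrow> nat \<Rightarrow> real)
    \<Rightarrow> (config \<Rightarrow> real) \<Rightarrow> config \<Rightarrow> real" where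
  "genLabs \<Lambda> N c r f \<eta> = genL \<Lambda> N c f \<eta> + genH N r f \<eta>"

definition opA :: "nat \<Rightarrow> (config \<Rightarrow> real) \<Rightarrow> config \<Rightarrow> real" where
  "opA N f \<eta> = (\<Sum>x\<in>sites_star N. real (\<eta> x) * f (removeP x \<eta>))"

text \<open>Markov semigroup of the (finite-state, on each Omega*_n) process generated by L^abs:
  E_eta[f(eta(t))] = (exp(t L^abs) f)(eta).\<close>
definition semigroup :: "nat set \<Rightarrow> nat \<Rightarrow> (config \<Rightarrow> config \<Rightarrow> real) \<Rightarrow> (nat \<Rightarrow> nat \<Rightarrow> real)
    \<Rightarrow> real \<Rightarrow> (config \<Rightarrow> real) \<Rightarrow> config \<Rightarrow> real" where
  "semigroup \<Lambda> N c r t f \<eta> = (\<Sum>k. t ^ k / fact k * ((genLabs \<Lambda> N c r ^^ k) f) \<eta>)"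

text \<open>G(eta,z) = E_eta[z^{eta_0(infinity)}] = lim_{t\<rightarrow>\<infinity>} E_eta[z^{eta_0(t)}].\<close>
definition genfun :: "nat set \<Rightarrow> nat \<Rightarrow> (config \<Rightarrow> config \<Rightarrow> real) \<Rightarrow> (nat \<Rightarrow> nat \<Rightarrow> real)
    \<Rightarrow> config \<Rightarrow> real \<Rightarrow> real" where
  "genfun \<Lambda> N c r \<eta> z = Lim at_top (\<lambda>t. semigroup \<Lambda> N c r t (\<lambda>\<xi>. z ^ \<xi> 0) \<eta>)"

end

theory Submission
  imports Defs
begin

text \<open>
  On each set Omega*_n the generator L^abs acts as the generator Q of a finite-state Markov chain.
  If \<kappa> bounds its exit rates, then Q + \<kappa> is a positive operator and
  exp(tQ) = e^(-\<kappa> t) exp(t(Q + \<kappa>)), so the power series defining the semigroup is positive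
  and fixes constants. Particles absorbed at 0 never leave, so Q maps the indicator of
  {\<eta>_0 \<ge> k} to a nonnegative function; its expectation is therefore nondecreasing in t and
  bounded, hence convergent. This yields the law (p_k) of \<eta>_0(\<infinity>) and shows that
  G(\<eta>, z) = \<Sum>_{k \<le> n} p_k z^k is a polynomial.

  Consistency makes the semigroup commute with A. For f(\<xi>) = z^(\<xi>_0) one finds on Omega*_n
  that (A f)(\<xi>) = \<xi>_0 z^(\<xi>_0 - 1) + (n - \<xi>_0) z^(\<xi>_0), which is ((1 - z) d/dz + n) f(\<xi>);
  letting t \<rightarrow> \<infinity> in E_\<eta>[(A f)(\<eta>(t))] = \<Sum>_i \<eta>_i E_(\<eta> - \<delta>_i)[f(\<eta>(t))] gives the
  differential equation. The integral formula follows by integrating the derivative of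
  G(\<eta>, u) / (1 - u)^n over [0, z].
\<close>

section \<open>Exponential series of operators on functions\<close>

definition exp_gen :: "(('a \<Rightarrow> real) \<Rightarrow> 'a \<Rightarrow> real) \<Rightarrow> real \<Rightarrow> ('a \<Rightarrow> real) \<Rightarrow> 'a \<Rightarrow> real" where
  "exp_gen T t f x = (\<Sum>k. t ^ k / fact k * (T ^^ k) f x)"

lemma exp_gen_has_real_derivative:
  assumes summable: "\<And>s. summable (\<lambda>k. s ^ k / fact k * (T ^^ k) g x)"
  shows "((\<lambda>s. exp_gen T s g x) has_real_derivative exp_gen T t (T g) x) (at t)"
proof -
  define a where "a k = (T ^^ k) g x / fact k" for k
  have exp_gen_eq: "exp_gen T s g x = (\<Sum>k. a k * s ^ k)" for s
    unfolding exp_gen_def a_def by (simp add: field_simps)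
  have diffs_a: "diffs a k = (T ^^ k) (T g) x / fact k" for k
  proof -
    have "(T ^^ Suc k) g = (T ^^ k) (T g)" by (simp only: funpow_Suc_right comp_def)
    moreover have "of_nat (Suc k) * (y / fact (Suc k)) = (y / fact k :: real)" for y
      by (simp add: divide_simps del: of_nat_Suc)
    ultimately show ?thesis unfolding diffs_def a_def by simp
  qed
  have exp_gen_diffs: "exp_gen T t (T g) x = (\<Sum>k. diffs a k * t ^ k)"
    unfolding exp_gen_def diffs_a by (simp add: field_simps)
  have "summable (\<lambda>k. a k * (\<bar>t\<bar> + 1) ^ k)"
    using summable[of "\<bar>t\<bar> + 1"] unfolding a_def by (simp add: field_simps)
  then have "((\<lambda>s. \<Sum>k. a k * s ^ k) has_real_derivative (\<Sum>k. diffs a k * t ^ k)) (at t)"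
    by (rule termdiffs_strong) simp
  then show ?thesis unfolding exp_gen_eq exp_gen_diffs .
qed

lemma funpow_linear_combination:
  fixes T :: "('a \<Rightarrow> real) \<Rightarrow> 'a \<Rightarrow> real"
  assumes "\<And>a b f g. T (\<lambda>x. a * f x + b * g x) = (\<lambda>y. a * T f y + b * T g y)"
  shows "(T ^^ k) (\<lambda>x. a * f x + b * g x) = (\<lambda>y. a * (T ^^ k) f y + b * (T ^^ k) g y)"
proof (induction k)
  case (Suc k)
  then show ?case by (simp add: assms)
qed simp

lemma linear_operator_sum:
  fixes T :: "('a \<Rightarrow> real) \<Rightarrow> 'a \<Rightarrow> real"
  assumes linear: "\<And>a b f g. T (\<lambda>x. a * f x + b * g x) = (\<lambda>y. a * T f y + b * T g y)"
  shows "T (\<lambda>x. \<Sum>j\<in>F. a j * g j x) = (\<lambda>y. \<Sum>j\<in>F. a j * T (g j) y)"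
proof (induction F rule: infinite_finite_induct)
  case (infinite F)
  show ?case using linear[of 0 "\<lambda>_. 0" 0 "\<lambda>_. 0"] infinite by simp
next
  case empty
  show ?case using linear[of 0 "\<lambda>_. 0" 0 "\<lambda>_. 0"] by simp
next
  case (insert j F)
  then show ?case using linear[of "a j" "g j" 1] by simp
qed

lemma monotone_bounded_tendsto_at_top:
  fixes f :: "real \<Rightarrow> real"
  assumes mono: "\<And>s t. 0 \<le> s \<Longrightarrow> s \<le> t \<Longrightarrow> f s \<le> f t"
    and bounded: "\<And>t. 0 \<le> t \<Longrightarrow> f t \<le> M"
  shows "\<exists>L. (f \<longlongrightarrow> L) at_top"
proof
  have bdd: "bdd_above (f ` {0..})" using bounded by (auto intro!: bdd_aboveI[of _ M])
  show "(f \<longlongrightarrow> (SUP t\<in>{0..}. f t)) at_top"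
  proof (rule increasing_tendsto)
    show "\<forall>\<^sub>F t in at_top. f t \<le> (SUP t\<in>{0..}. f t)"
      using eventually_ge_at_top[of 0] by eventually_elim (use bdd in \<open>auto intro: cSUP_upper\<close>)
    fix x assume "x < (SUP t\<in>{0..}. f t)"
    then obtain t0 where t0: "t0 \<in> {0..}" "x < f t0" using less_cSUP_iff[OF _ bdd] by force
    show "\<forall>\<^sub>F t in at_top. x < f t"
      using eventually_ge_at_top[of t0] by eventually_elim (use t0 mono in force)
  qed
qed

lemma pascal_sum_step:
  "(\<Sum>j\<le>k. of_nat (k choose j) * x ^ (k - j) * v (Suc j)) + x * (\<Sum>j\<le>k. of_nat (k choose j) * x ^ (k - j) * v j)
   = (\<Sum>j\<le>Suc k. of_nat (Suc k choose j) * x ^ (Suc k - j) * (v j :: real))"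
proof -
  have "x * (\<Sum>j\<le>k. of_nat (k choose j) * x ^ (k - j) * v j)
      = (\<Sum>j\<le>Suc k. of_nat (k choose j) * x ^ (Suc k - j) * v j)"
    unfolding sum_distrib_left by (simp add: Suc_diff_le algebra_simps)
  also have "\<dots> = x ^ Suc k * v 0 + (\<Sum>i\<le>k. of_nat (k choose Suc i) * x ^ (k - i) * v (Suc i))"
    unfolding sum.atMost_Suc_shift by simp
  finally have shifted: "x * (\<Sum>j\<le>k. of_nat (k choose j) * x ^ (k - j) * v j) = \<dots>" .
  have "(\<Sum>j\<le>Suc k. of_nat (Suc k choose j) * x ^ (Suc k - j) * v j)
      = x ^ Suc k * v 0 + (\<Sum>i\<le>k. of_nat (k choose i) * x ^ (k - i) * v (Suc i)
                                   + of_nat (k choose Suc i) * x ^ (k - i) * v (Suc i))"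
    unfolding sum.atMost_Suc_shift by (simp add: algebra_simps)
  then show ?thesis unfolding shifted sum.distrib by simp
qed

section \<open>Uniformizable generators\<close>

locale uniformizable_generator =
  fixes Q :: "('a \<Rightarrow> real) \<Rightarrow> 'a \<Rightarrow> real" and S :: "'a set" and \<kappa> :: real
  assumes finite_states: "finite S"
    and Q_linear: "Q (\<lambda>x. a * f x + b * g x) = (\<lambda>y. a * Q f y + b * Q g y)"
    and Q_const: "Q (\<lambda>_. a) = (\<lambda>_. 0)"
    and Q_local: "y \<in> S \<Longrightarrow> (\<And>x. x \<in> S \<Longrightarrow> f x = g x) \<Longrightarrow> Q f y = Q g y"
    and Q_plus_rate_nonneg: "y \<in> S \<Longrightarrow> (\<And>x. x \<in> S \<Longrightarrow> 0 \<le> f x) \<Longrightarrow> 0 \<le> Q f y + \<kappa> * f y"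
begin

text \<open>Uniformization: U is a positive operator and exp(t Q) = e^(-\<kappa> t) exp(t U).\<close>

definition U :: "('a \<Rightarrow> real) \<Rightarrow> 'a \<Rightarrow> real" where
  "U f = (\<lambda>y. Q f y + \<kappa> * f y)"

lemma U_linear: "U (\<lambda>x. a * f x + b * g x) = (\<lambda>y. a * U f y + b * U g y)"
  by (simp add: U_def Q_linear algebra_simps)

lemma U_pow_const: "(U ^^ k) (\<lambda>_. a) = (\<lambda>_. \<kappa> ^ k * a)"
  by (induction k) (simp_all add: U_def Q_const mult.assoc)

lemma U_pow_nonneg: "y \<in> S \<Longrightarrow> (\<And>x. x \<in> S \<Longrightarrow> 0 \<le> f x) \<Longrightarrow> 0 \<le> (U ^^ k) f y"
proof (induction k arbitrary: y)
  case (Suc k)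
  then show ?case unfolding funpow.simps comp_def U_def by (intro Q_plus_rate_nonneg) auto
qed simp

lemma U_pow_bound:
  assumes "y \<in> S"
  shows "\<bar>(U ^^ k) f y\<bar> \<le> \<kappa> ^ k * (\<Sum>x\<in>S. \<bar>f x\<bar>)"
proof -
  let ?M = "\<Sum>x\<in>S. \<bar>f x\<bar>"
  have "\<bar>f x\<bar> \<le> ?M" if "x \<in> S" for x
    using that finite_states by (intro member_le_sum) auto
  then have "0 \<le> (U ^^ k) (\<lambda>x. ?M * 1 + 1 * f x) y" "0 \<le> (U ^^ k) (\<lambda>x. ?M * 1 + (-1) * f x) y"
    by (intro U_pow_nonneg[OF assms]; force)+
  then show ?thesis
    unfolding funpow_linear_combination[OF U_linear] U_pow_const by (simp add: abs_le_iff mult.commute)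
qed

lemma Q_pow_binomial:
  "(Q ^^ k) f y = (\<Sum>j\<le>k. of_nat (k choose j) * (- \<kappa>) ^ (k - j) * (U ^^ j) f y)"
proof (induction k arbitrary: y)
  case (Suc k)
  have IH: "(Q ^^ k) f = (\<lambda>y. \<Sum>j\<le>k. of_nat (k choose j) * (- \<kappa>) ^ (k - j) * (U ^^ j) f y)"
    using Suc by auto
  have "(Q ^^ Suc k) f y = U ((Q ^^ k) f) y - \<kappa> * (Q ^^ k) f y"
    by (simp add: U_def)
  also have "\<dots> = (\<Sum>j\<le>k. of_nat (k choose j) * (- \<kappa>) ^ (k - j) * (U ^^ Suc j) f y)
      + (- \<kappa>) * (\<Sum>j\<le>k. of_nat (k choose j) * (- \<kappa>) ^ (k - j) * (U ^^ j) f y)"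
    unfolding IH by (subst linear_operator_sum[OF U_linear]) simp
  also have "\<dots> = (\<Sum>j\<le>Suc k. of_nat (Suc k choose j) * (- \<kappa>) ^ (Suc k - j) * (U ^^ j) f y)"
    by (rule pascal_sum_step)
  finally show ?case .
qed simp

lemma exp_gen_U_abs_summable: "y \<in> S \<Longrightarrow> summable (\<lambda>k. \<bar>t ^ k / fact k * (U ^^ k) f y\<bar>)"
proof (rule summable_comparison_test)
  assume y: "y \<in> S"
  let ?M = "\<Sum>x\<in>S. \<bar>f x\<bar>"
  show "summable (\<lambda>k. ?M * ((\<kappa> * \<bar>t\<bar>) ^ k /\<^sub>R fact k))"
    by (intro summable_mult summable_exp_generic)
  have "\<bar>t ^ k / fact k * (U ^^ k) f y\<bar> \<le> ?M * ((\<kappa> * \<bar>t\<bar>) ^ k /\<^sub>R fact k)" for k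
  proof -
    have "\<bar>t ^ k / fact k * (U ^^ k) f y\<bar> = \<bar>t\<bar> ^ k / fact k * \<bar>(U ^^ k) f y\<bar>"
      by (simp add: abs_mult power_abs)
    also have "\<dots> \<le> \<bar>t\<bar> ^ k / fact k * (\<kappa> ^ k * ?M)"
      by (intro mult_left_mono U_pow_bound[OF y]) auto
    finally show ?thesis by (simp add: power_mult_distrib divide_inverse mult_ac)
  qed
  then show "\<exists>N. \<forall>k\<ge>N. norm \<bar>t ^ k / fact k * (U ^^ k) f y\<bar> \<le> ?M * ((\<kappa> * \<bar>t\<bar>) ^ k /\<^sub>R fact k)"
    by auto
qed

lemma exp_gen_uniformization_sums:
  assumes y: "y \<in> S"
  shows "(\<lambda>k. t ^ k / fact k * (Q ^^ k) f y) sums (exp_gen U t f y * exp (- \<kappa> * t))"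
proof -
  define a where "a j = t ^ j / fact j * (U ^^ j) f y" for j
  define b where "b l = (- \<kappa> * t) ^ l /\<^sub>R fact l" for l
  have summable_a: "summable (\<lambda>j. norm (a j))"
    unfolding a_def real_norm_def by (rule exp_gen_U_abs_summable[OF y])
  have summable_b: "summable (\<lambda>l. norm (b l))" unfolding b_def by (rule summable_norm_exp)
  have product: "(\<Sum>i\<le>k. a i * b (k - i)) = t ^ k / fact k * (Q ^^ k) f y" for k
  proof -
    have "a i * b (k - i) = t ^ k / fact k * (of_nat (k choose i) * (- \<kappa>) ^ (k - i) * (U ^^ i) f y)"
      if "i \<le> k" for i
    proof -
      have "t ^ k = t ^ i * t ^ (k - i)" using that by (metis le_add_diff_inverse power_add)
      moreover have "(- (t * \<kappa>)) ^ (k - i) = t ^ (k - i) * (- \<kappa>) ^ (k - i)"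
        by (metis mult.commute mult_minus_right power_mult_distrib)
      ultimately show ?thesis unfolding a_def b_def using that by (simp add: binomial_fact field_simps)
    qed
    then show ?thesis unfolding Q_pow_binomial[of k] sum_distrib_left by (intro sum.cong) auto
  qed
  have sum_b: "(\<Sum>l. b l) = exp (- \<kappa> * t)" unfolding b_def by (simp add: exp_def)
  have sum_a: "(\<Sum>j. a j) = exp_gen U t f y" unfolding a_def exp_gen_def ..
  show ?thesis using Cauchy_product_sums[OF summable_a summable_b] unfolding product sum_a sum_b .
qed

lemma exp_gen_summable: "y \<in> S \<Longrightarrow> summable (\<lambda>k. t ^ k / fact k * (Q ^^ k) f y)"
  using exp_gen_uniformization_sums by (rule sums_summable)

lemma exp_gen_uniformization: "y \<in> S \<Longrightarrow> exp_gen Q t f y = exp_gen U t f y * exp (- \<kappa> * t)"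
  unfolding exp_gen_def[of Q] by (rule sums_unique[OF exp_gen_uniformization_sums, symmetric])

lemma exp_gen_nonneg:
  assumes "y \<in> S" "0 \<le> t" "\<And>x. x \<in> S \<Longrightarrow> 0 \<le> f x"
  shows "0 \<le> exp_gen Q t f y"
proof -
  have "0 \<le> exp_gen U t f y"
    unfolding exp_gen_def using assms
    by (intro suminf_nonneg summable_rabs_cancel[OF exp_gen_U_abs_summable] allI mult_nonneg_nonneg
        U_pow_nonneg) auto
  then show ?thesis by (simp add: exp_gen_uniformization[OF assms(1)])
qed

lemma exp_gen_linear:
  assumes "y \<in> S"
  shows "exp_gen Q t (\<lambda>x. a * f x + b * g x) y = a * exp_gen Q t f y + b * exp_gen Q t g y"
proof -
  have "exp_gen Q t (\<lambda>x. a * f x + b * g x) y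
      = (\<Sum>k. a * (t ^ k / fact k * (Q ^^ k) f y) + b * (t ^ k / fact k * (Q ^^ k) g y))"
    unfolding exp_gen_def funpow_linear_combination[OF Q_linear] by (simp add: algebra_simps)
  also have "\<dots> = (\<Sum>k. a * (t ^ k / fact k * (Q ^^ k) f y)) + (\<Sum>k. b * (t ^ k / fact k * (Q ^^ k) g y))"
    by (intro suminf_add[symmetric] summable_mult exp_gen_summable[OF assms])
  also have "\<dots> = a * exp_gen Q t f y + b * exp_gen Q t g y"
    unfolding exp_gen_def by (simp only: suminf_mult[OF exp_gen_summable[OF assms]])
  finally show ?thesis .
qed

lemma exp_gen_const: "exp_gen Q t (\<lambda>_. a) y = a"
proof -
  have "(Q ^^ Suc k) (\<lambda>_. a) = (\<lambda>_. 0)" for k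
    by (induction k) (simp_all add: Q_const)
  then have "(\<lambda>k. t ^ k / fact k * (Q ^^ k) (\<lambda>_. a) y) = (\<lambda>k. if k = 0 then a else 0)"
    by (auto simp: fun_eq_iff gr0_conv_Suc)
  then show ?thesis
    unfolding exp_gen_def using sums_single[of 0 "\<lambda>_. a"] by (simp add: sums_iff)
qed

lemma exp_gen_sum:
  assumes "y \<in> S"
  shows "exp_gen Q t (\<lambda>x. \<Sum>i\<in>F. a i * f i x) y = (\<Sum>i\<in>F. a i * exp_gen Q t (f i) y)"
proof (induction F rule: infinite_finite_induct)
  case (insert i F)
  have "exp_gen Q t (\<lambda>x. \<Sum>j\<in>insert i F. a j * f j x) y
      = exp_gen Q t (\<lambda>x. a i * f i x + 1 * (\<Sum>j\<in>F. a j * f j x)) y"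
    using insert by simp
  also have "\<dots> = a i * exp_gen Q t (f i) y + 1 * exp_gen Q t (\<lambda>x. \<Sum>j\<in>F. a j * f j x) y"
    by (rule exp_gen_linear[OF assms])
  finally show ?case using insert by simp
qed (simp_all add: exp_gen_const)

lemma Q_pow_local: "y \<in> S \<Longrightarrow> (\<And>x. x \<in> S \<Longrightarrow> f x = g x) \<Longrightarrow> (Q ^^ k) f y = (Q ^^ k) g y"
proof (induction k arbitrary: y)
  case (Suc k)
  have "Q ((Q ^^ k) f) y = Q ((Q ^^ k) g) y"
    by (rule Q_local[OF Suc.prems(1)], rule Suc.IH) (use Suc.prems in auto)
  then show ?case by simp
qed simp

lemma exp_gen_local:
  assumes "y \<in> S" "\<And>x. x \<in> S \<Longrightarrow> f x = g x"
  shows "exp_gen Q t f y = exp_gen Q t g y"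
  unfolding exp_gen_def by (simp only: Q_pow_local[OF assms])

lemma exp_gen_mono:
  assumes y: "y \<in> S" and generator_nonneg: "\<And>x. x \<in> S \<Longrightarrow> 0 \<le> Q g x"
    and "0 \<le> s" "s \<le> t"
  shows "exp_gen Q s g y \<le> exp_gen Q t g y"
proof (rule DERIV_nonneg_imp_nondecreasing[OF \<open>s \<le> t\<close>])
  fix u assume "s \<le> u"
  have "((\<lambda>t. exp_gen Q t g y) has_real_derivative exp_gen Q u (Q g) y) (at u)"
    by (rule exp_gen_has_real_derivative[OF exp_gen_summable[OF y]])
  moreover have "0 \<le> exp_gen Q u (Q g) y"
    using \<open>0 \<le> s\<close> \<open>s \<le> u\<close> by (intro exp_gen_nonneg[OF y] generator_nonneg) auto
  ultimately show "\<exists>y'. ((\<lambda>t. exp_gen Q t g y) has_real_derivative y') (at u) \<and> 0 \<le> y'"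
    by blast
qed

lemma exp_gen_le_sum_abs:
  assumes "y \<in> S" "0 \<le> t"
  shows "exp_gen Q t g y \<le> (\<Sum>x\<in>S. \<bar>g x\<bar>)"
proof -
  let ?M = "\<Sum>x\<in>S. \<bar>g x\<bar>"
  have "\<bar>g x\<bar> \<le> ?M" if "x \<in> S" for x
    using that finite_states by (intro member_le_sum) auto
  then have "0 \<le> exp_gen Q t (\<lambda>x. ?M * 1 + (-1) * g x) y"
    by (intro exp_gen_nonneg[OF assms]) force
  then show ?thesis unfolding exp_gen_linear[OF assms(1)] exp_gen_const by simp
qed

lemma exp_gen_convergent_at_top:
  assumes "y \<in> S" "\<And>x. x \<in> S \<Longrightarrow> 0 \<le> Q g x"
  shows "\<exists>L. ((\<lambda>t. exp_gen Q t g y) \<longlongrightarrow> L) at_top"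
  using exp_gen_mono[OF assms] exp_gen_le_sum_abs[OF assms(1)] by (rule monotone_bounded_tendsto_at_top)

end

section \<open>Configurations and the absorbing generator\<close>

lemma sum_fun_upd_add:
  fixes f :: "'a \<Rightarrow> nat"
  assumes "finite A" "x \<in> A"
  shows "sum (f(x := v)) A + f x = sum f A + v"
proof -
  have "sum (f(x := v)) (A - {x}) = sum f (A - {x})" by (rule sum.cong) auto
  then show ?thesis using sum.remove[OF assms, of f] sum.remove[OF assms, of "f(x := v)"] by simp
qed

lemma finite_sites_star: "finite (sites_star N)"
  by (simp add: sites_star_def)

lemma sites_star_eq: "sites_star N = insert 0 (insert (N + 1) (sites_V N))"
  unfolding sites_star_def sites_V_def by auto

lemma Omega_star_site_le: "\<xi> \<in> Omega_star \<Lambda> N m \<Longrightarrow> x \<in> sites_star N \<Longrightarrow> \<xi> x \<le> m"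
  using member_le_sum[of x "sites_star N" \<xi>] finite_sites_star
  by (auto simp: Omega_star_def nparticles_def)

lemma finite_Omega_star: "finite (Omega_star \<Lambda> N m)"
proof -
  let ?extend = "\<lambda>g x. if x \<in> sites_star N then g x else 0"
  have "Omega_star \<Lambda> N m \<subseteq> ?extend ` (sites_star N \<rightarrow>\<^sub>E {0..m})"
  proof
    fix \<xi> assume \<xi>: "\<xi> \<in> Omega_star \<Lambda> N m"
    show "\<xi> \<in> ?extend ` (sites_star N \<rightarrow>\<^sub>E {0..m})"
    proof
      show "\<xi> = ?extend (restrict \<xi> (sites_star N))" using \<xi> by (auto simp: Omega_star_def)
      show "restrict \<xi> (sites_star N) \<in> sites_star N \<rightarrow>\<^sub>E {0..m}"
        using Omega_star_site_le[OF \<xi>] by auto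
    qed
  qed
  moreover have "finite (sites_star N \<rightarrow>\<^sub>E {0..m})"
    by (intro finite_PiE finite_sites_star) auto
  ultimately show ?thesis by (meson finite_imageI finite_subset)
qed

lemma embedV_in_Omega_star:
  assumes "\<xi> \<in> Omega_star \<Lambda> N m" "\<zeta> \<in> Omega_V \<Lambda> N (\<Sum>i\<in>sites_V N. \<xi> i)"
  shows "embedV N \<zeta> \<xi> \<in> Omega_star \<Lambda> N m"
proof -
  have "0 \<notin> sites_V N" "N + 1 \<notin> sites_V N" by (auto simp: sites_V_def)
  moreover have "(\<Sum>i\<in>sites_V N. embedV N \<zeta> \<xi> i) = (\<Sum>i\<in>sites_V N. \<zeta> i)"
    by (rule sum.cong) (auto simp: embedV_def)
  ultimately show ?thesis using assms
    by (auto simp: Omega_star_def Omega_V_def nparticles_def sites_star_eq embedV_def sites_V_def)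
qed

lemma removeP_absent: "\<xi> x = 0 \<Longrightarrow> removeP x \<xi> = \<xi>"
  by (auto simp: removeP_def)

lemma semigroup_eq_exp_gen: "semigroup \<Lambda> N c r = exp_gen (genLabs \<Lambda> N c r)"
  by (intro ext) (simp add: semigroup_def exp_gen_def)

locale absorbing_process =
  fixes \<Lambda> :: "nat set" and N :: nat
    and c :: "config \<Rightarrow> config \<Rightarrow> real" and r :: "nat \<Rightarrow> nat \<Rightarrow> real"
  assumes Lambda_down: "\<forall>a\<in>\<Lambda>. \<forall>b\<le>a. b \<in> \<Lambda>"
    and c_nonneg: "\<forall>\<zeta>0 \<zeta>. c \<zeta>0 \<zeta> \<ge> 0"
    and r_nonneg: "\<forall>i\<in>sites_V N. \<forall>j\<in>sites_abs N. r i j \<ge> 0"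
begin

lemma removeP_in_Omega_star:
  assumes \<xi>: "\<xi> \<in> Omega_star \<Lambda> N m" and x: "x \<in> sites_star N" "0 < \<xi> x"
  shows "removeP x \<xi> \<in> Omega_star \<Lambda> N (m - 1)"
proof -
  have "nparticles N (removeP x \<xi>) + \<xi> x = nparticles N \<xi> + (\<xi> x - 1)"
    unfolding nparticles_def removeP_def by (rule sum_fun_upd_add[OF finite_sites_star x(1)])
  then show ?thesis
    using \<xi> x Lambda_down by (auto simp: Omega_star_def removeP_def)
qed

lemma removeP_in_some_Omega_star:
  assumes "\<xi> \<in> Omega_star \<Lambda> N m"
  obtains m' where "removeP x \<xi> \<in> Omega_star \<Lambda> N m'"
proof (cases "x \<in> sites_star N \<and> 0 < \<xi> x")
  case True
  then show ?thesis using removeP_in_Omega_star[OF assms] that by blast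
next
  case False
  then have "\<xi> x = 0" using assms by (auto simp: Omega_star_def)
  then show ?thesis using assms that by (simp add: removeP_absent)
qed

lemma moveP_in_Omega_star:
  assumes \<xi>: "\<xi> \<in> Omega_star \<Lambda> N m"
    and ij: "i \<in> sites_V N" "j \<in> sites_abs N" "0 < \<xi> i"
  shows "moveP i j \<xi> \<in> Omega_star \<Lambda> N m"
proof -
  have sites: "i \<noteq> j" "i \<in> sites_star N" "j \<in> sites_star N" "j \<notin> sites_V N"
    using ij by (auto simp: sites_V_def sites_abs_def sites_star_def)
  have removed: "removeP i \<xi> \<in> Omega_star \<Lambda> N (m - 1)"
    by (rule removeP_in_Omega_star[OF \<xi> sites(2) ij(3)])
  have "0 < m" using Omega_star_site_le[OF \<xi> sites(2)] ij(3) by simp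
  moreover have "nparticles N (moveP i j \<xi>) + removeP i \<xi> j
      = nparticles N (removeP i \<xi>) + (removeP i \<xi> j + 1)"
    unfolding nparticles_def moveP_def by (rule sum_fun_upd_add[OF finite_sites_star sites(3)])
  ultimately show ?thesis
    using removed sites by (auto simp: Omega_star_def moveP_def)
qed

definition exit_rate :: "config \<Rightarrow> real" where
  "exit_rate \<xi> = (\<Sum>\<zeta>\<in>Omega_V \<Lambda> N (\<Sum>i\<in>sites_V N. \<xi> i). c (restrV N \<xi>) \<zeta>)
     + (\<Sum>i\<in>sites_V N. \<Sum>j\<in>sites_abs N. r i j * real (\<xi> i))"

lemma genLabs_eq_jumps_minus_exit:
  "genLabs \<Lambda> N c r f \<xi> =
     (\<Sum>\<zeta>\<in>Omega_V \<Lambda> N (\<Sum>i\<in>sites_V N. \<xi> i). c (restrV N \<xi>) \<zeta> * f (embedV N \<zeta> \<xi>))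
     + (\<Sum>i\<in>sites_V N. \<Sum>j\<in>sites_abs N. r i j * real (\<xi> i) * f (moveP i j \<xi>))
     - exit_rate \<xi> * f \<xi>"
  unfolding genLabs_def genL_def genH_def exit_rate_def
  by (simp add: right_diff_distrib sum_subtractf distrib_right sum_distrib_right)

lemma exit_rate_nonneg: "0 \<le> exit_rate \<xi>"
  unfolding exit_rate_def using c_nonneg r_nonneg
  by (intro add_nonneg_nonneg sum_nonneg mult_nonneg_nonneg) auto

lemma genLabs_local:
  assumes \<xi>: "\<xi> \<in> Omega_star \<Lambda> N m" and fg: "\<And>\<zeta>. \<zeta> \<in> Omega_star \<Lambda> N m \<Longrightarrow> f \<zeta> = g \<zeta>"
  shows "genLabs \<Lambda> N c r f \<xi> = genLabs \<Lambda> N c r g \<xi>"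
proof -
  have "r i j * real (\<xi> i) * f (moveP i j \<xi>) = r i j * real (\<xi> i) * g (moveP i j \<xi>)"
    if "i \<in> sites_V N" "j \<in> sites_abs N" for i j
    using fg[OF moveP_in_Omega_star[OF \<xi> that]] by (cases "\<xi> i = 0") auto
  then have "(\<Sum>i\<in>sites_V N. \<Sum>j\<in>sites_abs N. r i j * real (\<xi> i) * f (moveP i j \<xi>))
      = (\<Sum>i\<in>sites_V N. \<Sum>j\<in>sites_abs N. r i j * real (\<xi> i) * g (moveP i j \<xi>))"
    by (intro sum.cong refl)
  moreover have "(\<Sum>\<zeta>\<in>Omega_V \<Lambda> N (\<Sum>i\<in>sites_V N. \<xi> i). c (restrV N \<xi>) \<zeta> * f (embedV N \<zeta> \<xi>))
      = (\<Sum>\<zeta>\<in>Omega_V \<Lambda> N (\<Sum>i\<in>sites_V N. \<xi> i). c (restrV N \<xi>) \<zeta> * g (embedV N \<zeta> \<xi>))"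
    by (intro sum.cong refl) (simp add: fg[OF embedV_in_Omega_star[OF \<xi>]])
  ultimately show ?thesis
    unfolding genLabs_eq_jumps_minus_exit fg[OF \<xi>] by simp
qed

lemma genLabs_plus_rate_nonneg:
  assumes \<xi>: "\<xi> \<in> Omega_star \<Lambda> N m" and f: "\<And>\<zeta>. \<zeta> \<in> Omega_star \<Lambda> N m \<Longrightarrow> 0 \<le> f \<zeta>"
    and rate: "exit_rate \<xi> \<le> \<kappa>"
  shows "0 \<le> genLabs \<Lambda> N c r f \<xi> + \<kappa> * f \<xi>"
proof -
  have jumps_within_V: "0 \<le> (\<Sum>\<zeta>\<in>Omega_V \<Lambda> N (\<Sum>i\<in>sites_V N. \<xi> i). c (restrV N \<xi>) \<zeta> * f (embedV N \<zeta> \<xi>))"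
    using c_nonneg f[OF embedV_in_Omega_star[OF \<xi>]] by (intro sum_nonneg mult_nonneg_nonneg) auto
  have jumps_to_boundary:
    "0 \<le> (\<Sum>i\<in>sites_V N. \<Sum>j\<in>sites_abs N. r i j * real (\<xi> i) * f (moveP i j \<xi>))"
  proof (intro sum_nonneg)
    fix i j assume "i \<in> sites_V N" "j \<in> sites_abs N"
    then show "0 \<le> r i j * real (\<xi> i) * f (moveP i j \<xi>)"
      using f[OF moveP_in_Omega_star[OF \<xi>]] r_nonneg by (cases "\<xi> i = 0") auto
  qed
  have "0 \<le> \<kappa> * f \<xi> - exit_rate \<xi> * f \<xi>"
    using rate f[OF \<xi>] by (simp add: left_diff_distrib[symmetric])
  then show ?thesis
    unfolding genLabs_eq_jumps_minus_exit using jumps_within_V jumps_to_boundary by linarith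
qed

lemma uniformizable_genLabs:
  "uniformizable_generator (genLabs \<Lambda> N c r) (Omega_star \<Lambda> N m) (\<Sum>\<xi>\<in>Omega_star \<Lambda> N m. exit_rate \<xi>)"
proof
  show "genLabs \<Lambda> N c r (\<lambda>x. a * f x + b * g x) = (\<lambda>y. a * genLabs \<Lambda> N c r f y + b * genLabs \<Lambda> N c r g y)"
    for a b f g
  proof
    fix \<xi>
    have "genL \<Lambda> N c (\<lambda>x. a * f x + b * g x) \<xi> = a * genL \<Lambda> N c f \<xi> + b * genL \<Lambda> N c g \<xi>"
      unfolding genL_def sum_distrib_left sum.distrib[symmetric]
      by (rule sum.cong) (simp_all add: algebra_simps)
    moreover have "genH N r (\<lambda>x. a * f x + b * g x) \<xi> = a * genH N r f \<xi> + b * genH N r g \<xi>"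
      unfolding genH_def sum_distrib_left sum.distrib[symmetric]
      by (intro sum.cong refl) (simp add: algebra_simps)
    ultimately show "genLabs \<Lambda> N c r (\<lambda>x. a * f x + b * g x) \<xi>
        = a * genLabs \<Lambda> N c r f \<xi> + b * genLabs \<Lambda> N c r g \<xi>"
      unfolding genLabs_def by (simp add: algebra_simps)
  qed
  show "genLabs \<Lambda> N c r (\<lambda>_. a) = (\<lambda>_. 0)" for a
    by (simp add: genLabs_def genL_def genH_def fun_eq_iff)
  show "0 \<le> genLabs \<Lambda> N c r f \<xi> + (\<Sum>\<xi>\<in>Omega_star \<Lambda> N m. exit_rate \<xi>) * f \<xi>"
    if "\<xi> \<in> Omega_star \<Lambda> N m" "\<And>\<zeta>. \<zeta> \<in> Omega_star \<Lambda> N m \<Longrightarrow> 0 \<le> f \<zeta>" for f \<xi>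
    using that finite_Omega_star exit_rate_nonneg
    by (intro genLabs_plus_rate_nonneg member_le_sum) auto
qed (auto intro: finite_Omega_star genLabs_local)

section \<open>Absorption at site 0\<close>

lemma genLabs_absorbed_at_least_nonneg: "0 \<le> genLabs \<Lambda> N c r (\<lambda>\<zeta>. of_bool (k \<le> \<zeta> 0)) \<xi>"
proof -
  have "embedV N \<zeta> \<xi> 0 = \<xi> 0" for \<zeta> by (simp add: embedV_def sites_V_def)
  then have "genL \<Lambda> N c (\<lambda>\<zeta>. of_bool (k \<le> \<zeta> 0)) \<xi> = 0" by (simp add: genL_def)
  moreover have "0 \<le> genH N r (\<lambda>\<zeta>. of_bool (k \<le> \<zeta> 0)) \<xi>"
    unfolding genH_def
  proof (intro sum_nonneg)
    fix i j assume ij: "i \<in> sites_V N" "j \<in> sites_abs N"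
    have "\<xi> 0 \<le> moveP i j \<xi> 0" using ij(1) by (auto simp: moveP_def removeP_def sites_V_def)
    then show "0 \<le> r i j * real (\<xi> i) * (of_bool (k \<le> moveP i j \<xi> 0) - of_bool (k \<le> \<xi> 0))"
      using r_nonneg ij by auto
  qed
  ultimately show ?thesis by (simp add: genLabs_def)
qed

definition absorption_law :: "config \<Rightarrow> nat \<Rightarrow> real" where
  "absorption_law \<xi> k = Lim at_top (\<lambda>t. semigroup \<Lambda> N c r t (\<lambda>\<zeta>. of_bool (\<zeta> 0 = k)) \<xi>)"

lemma tendsto_absorption_law:
  assumes \<xi>: "\<xi> \<in> Omega_star \<Lambda> N m"
  shows "((\<lambda>t. semigroup \<Lambda> N c r t (\<lambda>\<zeta>. of_bool (\<zeta> 0 = k)) \<xi>) \<longlongrightarrow> absorption_law \<xi> k) at_top"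
proof -
  interpret uniformizable_generator "genLabs \<Lambda> N c r" "Omega_star \<Lambda> N m"
    "\<Sum>\<xi>\<in>Omega_star \<Lambda> N m. exit_rate \<xi>"
    by (rule uniformizable_genLabs)
  have convergent: "\<exists>L. ((\<lambda>t. exp_gen (genLabs \<Lambda> N c r) t (\<lambda>\<zeta>. of_bool (j \<le> \<zeta> 0)) \<xi>) \<longlongrightarrow> L) at_top"
    for j
    by (rule exp_gen_convergent_at_top[OF \<xi>]) (rule genLabs_absorbed_at_least_nonneg)
  obtain L1 where L1: "((\<lambda>t. exp_gen (genLabs \<Lambda> N c r) t (\<lambda>\<zeta>. of_bool (k \<le> \<zeta> 0)) \<xi>) \<longlongrightarrow> L1) at_top"
    using convergent[of k] by blast
  obtain L2 where L2: "((\<lambda>t. exp_gen (genLabs \<Lambda> N c r) t (\<lambda>\<zeta>. of_bool (Suc k \<le> \<zeta> 0)) \<xi>) \<longlongrightarrow> L2) at_top"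
    using convergent[of "Suc k"] by blast
  have indicator_eq:
    "(\<lambda>\<zeta>. of_bool (\<zeta> 0 = k)) = (\<lambda>\<zeta>. 1 * of_bool (k \<le> \<zeta> 0) + (-1) * of_bool (Suc k \<le> \<zeta> 0) :: real)"
    by (auto simp: fun_eq_iff)
  have "((\<lambda>t. semigroup \<Lambda> N c r t (\<lambda>\<zeta>. of_bool (\<zeta> 0 = k)) \<xi>) \<longlongrightarrow> L1 - L2) at_top"
    unfolding semigroup_eq_exp_gen indicator_eq exp_gen_linear[OF \<xi>]
    using tendsto_diff[OF L1 L2] by simp
  moreover from this have "absorption_law \<xi> k = L1 - L2"
    unfolding absorption_law_def by (rule tendsto_Lim[rotated]) simp
  ultimately show ?thesis by simp
qed

lemma tendsto_semigroup_site0: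
  assumes \<xi>: "\<xi> \<in> Omega_star \<Lambda> N m"
  shows "((\<lambda>t. semigroup \<Lambda> N c r t (\<lambda>\<zeta>. \<phi> (\<zeta> 0)) \<xi>) \<longlongrightarrow> (\<Sum>k\<le>m. \<phi> k * absorption_law \<xi> k)) at_top"
proof -
  interpret uniformizable_generator "genLabs \<Lambda> N c r" "Omega_star \<Lambda> N m"
    "\<Sum>\<xi>\<in>Omega_star \<Lambda> N m. exit_rate \<xi>"
    by (rule uniformizable_genLabs)
  have "\<phi> (\<zeta> 0) = (\<Sum>k\<le>m. \<phi> k * of_bool (\<zeta> 0 = k))" if "\<zeta> \<in> Omega_star \<Lambda> N m" for \<zeta>
    using Omega_star_site_le[OF that, of 0]
    by (simp add: sites_star_def of_bool_def sum.delta' mult.commute[of "\<phi> _"] if_distrib cong: if_cong)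
  then have "exp_gen (genLabs \<Lambda> N c r) t (\<lambda>\<zeta>. \<phi> (\<zeta> 0)) \<xi>
      = exp_gen (genLabs \<Lambda> N c r) t (\<lambda>\<zeta>. \<Sum>k\<le>m. \<phi> k * of_bool (\<zeta> 0 = k)) \<xi>" for t
    by (rule exp_gen_local[OF \<xi>])
  then have "semigroup \<Lambda> N c r t (\<lambda>\<zeta>. \<phi> (\<zeta> 0)) \<xi>
      = (\<Sum>k\<le>m. \<phi> k * semigroup \<Lambda> N c r t (\<lambda>\<zeta>. of_bool (\<zeta> 0 = k)) \<xi>)" for t
    unfolding semigroup_eq_exp_gen exp_gen_sum[OF \<xi>] .
  then show ?thesis by (simp add: tendsto_sum tendsto_mult tendsto_absorption_law[OF \<xi>])
qed

lemma genfun_eq_polynomial: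
  assumes "\<xi> \<in> Omega_star \<Lambda> N m"
  shows "genfun \<Lambda> N c r \<xi> = (\<lambda>z. \<Sum>k\<le>m. z ^ k * absorption_law \<xi> k)"
  unfolding genfun_def by (intro ext tendsto_Lim tendsto_semigroup_site0[OF assms]) simp

lemma tendsto_genfun:
  assumes "\<xi> \<in> Omega_star \<Lambda> N m"
  shows "((\<lambda>t. semigroup \<Lambda> N c r t (\<lambda>\<zeta>. z ^ \<zeta> 0) \<xi>) \<longlongrightarrow> genfun \<Lambda> N c r \<xi> z) at_top"
  unfolding genfun_eq_polynomial[OF assms] by (rule tendsto_semigroup_site0[OF assms])

lemma genfun_has_real_derivative:
  assumes "\<xi> \<in> Omega_star \<Lambda> N m"
  shows "(genfun \<Lambda> N c r \<xi> has_real_derivative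
           (\<Sum>k\<le>m. real k * z ^ (k - 1) * absorption_law \<xi> k)) (at z)"
  unfolding genfun_eq_polynomial[OF assms] by (auto intro!: derivative_eq_intros)

end

section \<open>Consistency and the generating function\<close>

lemma linear_ode_solution_formula:
  fixes G G' h :: "real \<Rightarrow> real"
  assumes z: "0 \<le> z" "z < 1"
    and G': "\<And>u. u \<in> {0..z} \<Longrightarrow> (G has_real_derivative G' u) (at u)"
    and ode: "\<And>u. u \<in> {0..z} \<Longrightarrow> (1 - u) * G' u + real n * G u = h u"
  shows "G z = (1 - z) ^ n * G 0 + (1 - z) ^ n * integral {0..z} (\<lambda>u. h u / (1 - u) ^ (n + 1))"
proof -
  define F where "F u = G u / (1 - u) ^ n" for u
  have F': "(F has_vector_derivative h u / (1 - u) ^ (n + 1)) (at u within {0..z})"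
    if u: "u \<in> {0..z}" for u
  proof -
    have pos: "0 < 1 - u" using u z by auto
    have power_pred: "real n * (1 - u) ^ (n - 1) = real n * (1 - u) ^ n / (1 - u)"
      using pos by (cases n) simp_all
    have "(F has_real_derivative
        (G' u * (1 - u) ^ n + G u * (real n * (1 - u) ^ (n - 1))) / ((1 - u) ^ n * (1 - u) ^ n)) (at u)"
      unfolding F_def using pos by (auto intro!: derivative_eq_intros G'[OF u])
    also have "(G' u * (1 - u) ^ n + G u * (real n * (1 - u) ^ (n - 1))) / ((1 - u) ^ n * (1 - u) ^ n)
        = h u / (1 - u) ^ (n + 1)"
      using pos unfolding power_pred ode[OF u, symmetric] by (simp add: field_simps)
    finally show ?thesis
      by (simp add: has_real_derivative_iff_has_vector_derivative has_vector_derivative_at_within)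
  qed
  have "integral {0..z} (\<lambda>u. h u / (1 - u) ^ (n + 1)) = F z - F 0"
    by (rule integral_unique[OF fundamental_theorem_of_calculus[OF z(1) F']])
  then show ?thesis
    unfolding F_def using z by (simp add: field_simps)
qed

lemma opA_power_site0:
  assumes "\<zeta> \<in> Omega_star \<Lambda> N n"
  shows "opA N (\<lambda>\<xi>. z ^ \<xi> 0) \<zeta> = real (\<zeta> 0) * z ^ (\<zeta> 0 - 1) + (real n - real (\<zeta> 0)) * z ^ \<zeta> 0"
proof -
  have site0: "0 \<in> sites_star N" by (simp add: sites_star_def)
  have "(\<Sum>x\<in>sites_star N - {0}. real (\<zeta> x) * z ^ removeP x \<zeta> 0)
      = real (\<Sum>x\<in>sites_star N - {0}. \<zeta> x) * z ^ \<zeta> 0"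
    by (auto simp: removeP_def sum_distrib_right intro: sum.cong)
  moreover have "(\<Sum>x\<in>sites_star N - {0}. \<zeta> x) = n - \<zeta> 0"
    using assms sum.remove[OF finite_sites_star site0, of \<zeta>] by (auto simp: Omega_star_def nparticles_def)
  moreover have "\<zeta> 0 \<le> n" using Omega_star_site_le[OF assms site0] .
  ultimately show ?thesis
    unfolding opA_def sum.remove[OF finite_sites_star site0] by (simp add: removeP_def of_nat_diff)
qed

locale consistent_absorbing_process = absorbing_process +
  assumes consistent: "\<forall>f. \<forall>\<xi>\<in>Omega_star_all \<Lambda> N.
    genLabs \<Lambda> N c r (opA N f) \<xi> = opA N (genLabs \<Lambda> N c r f) \<xi>"
begin

lemma genLabs_pow_opA:
  "\<zeta> \<in> Omega_star \<Lambda> N m \<Longrightarrow> (genLabs \<Lambda> N c r ^^ k) (opA N f) \<zeta> = opA N ((genLabs \<Lambda> N c r ^^ k) f) \<zeta>"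
proof (induction k arbitrary: \<zeta>)
  case (Suc k)
  have "genLabs \<Lambda> N c r ((genLabs \<Lambda> N c r ^^ k) (opA N f)) \<zeta>
      = genLabs \<Lambda> N c r (opA N ((genLabs \<Lambda> N c r ^^ k) f)) \<zeta>"
    by (rule genLabs_local[OF Suc.prems], rule Suc.IH)
  also have "\<dots> = opA N (genLabs \<Lambda> N c r ((genLabs \<Lambda> N c r ^^ k) f)) \<zeta>"
    using consistent Suc.prems by (auto simp: Omega_star_all_def)
  finally show ?case by simp
qed simp

lemma semigroup_opA:
  assumes \<eta>: "\<eta> \<in> Omega_star \<Lambda> N n"
  shows "semigroup \<Lambda> N c r t (opA N f) \<eta>
    = (\<Sum>x\<in>sites_star N. real (\<eta> x) * semigroup \<Lambda> N c r t f (removeP x \<eta>))"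
proof -
  let ?Q = "genLabs \<Lambda> N c r"
  have summable: "summable (\<lambda>k. t ^ k / fact k * (?Q ^^ k) f (removeP x \<eta>))" for x
  proof -
    obtain m where "removeP x \<eta> \<in> Omega_star \<Lambda> N m" using removeP_in_some_Omega_star[OF \<eta>] .
    then show ?thesis by (rule uniformizable_generator.exp_gen_summable[OF uniformizable_genLabs])
  qed
  have "semigroup \<Lambda> N c r t (opA N f) \<eta>
      = (\<Sum>k. \<Sum>x\<in>sites_star N. real (\<eta> x) * (t ^ k / fact k * (?Q ^^ k) f (removeP x \<eta>)))"
    unfolding semigroup_def genLabs_pow_opA[OF \<eta>] opA_def by (simp add: sum_distrib_left algebra_simps)
  also have "\<dots> = (\<Sum>x\<in>sites_star N. \<Sum>k. real (\<eta> x) * (t ^ k / fact k * (?Q ^^ k) f (removeP x \<eta>)))"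
    by (intro suminf_sum summable_mult summable)
  also have "\<dots> = (\<Sum>x\<in>sites_star N. real (\<eta> x) * semigroup \<Lambda> N c r t f (removeP x \<eta>))"
    unfolding semigroup_def by (intro sum.cong refl suminf_mult summable)
  finally show ?thesis .
qed

lemma genfun_ode:
  assumes \<eta>: "\<eta> \<in> Omega_star \<Lambda> N n"
  shows "(1 - z) * (\<Sum>k\<le>n. real k * z ^ (k - 1) * absorption_law \<eta> k) + real n * genfun \<Lambda> N c r \<eta> z
    = (\<Sum>x\<in>sites_star N. real (\<eta> x) * genfun \<Lambda> N c r (removeP x \<eta>) z)"
proof -
  let ?f = "\<lambda>\<xi>. z ^ \<xi> 0"
  let ?coeff = "\<lambda>k. real k * z ^ (k - 1) + (real n - real k) * z ^ k"
  have "((\<lambda>t. semigroup \<Lambda> N c r t ?f (removeP x \<eta>)) \<longlongrightarrow> genfun \<Lambda> N c r (removeP x \<eta>) z) at_top"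
    for x
  proof -
    obtain m where "removeP x \<eta> \<in> Omega_star \<Lambda> N m" using removeP_in_some_Omega_star[OF \<eta>] .
    then show ?thesis by (rule tendsto_genfun)
  qed
  then have to_rhs: "((\<lambda>t. semigroup \<Lambda> N c r t (opA N ?f) \<eta>)
      \<longlongrightarrow> (\<Sum>x\<in>sites_star N. real (\<eta> x) * genfun \<Lambda> N c r (removeP x \<eta>) z)) at_top"
    unfolding semigroup_opA[OF \<eta>] by (intro tendsto_sum tendsto_mult tendsto_const)
  have "semigroup \<Lambda> N c r t (opA N ?f) \<eta> = semigroup \<Lambda> N c r t (\<lambda>\<zeta>. ?coeff (\<zeta> 0)) \<eta>" for t
    unfolding semigroup_eq_exp_gen
    by (rule uniformizable_generator.exp_gen_local[OF uniformizable_genLabs \<eta>])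
      (simp add: opA_power_site0)
  then have to_lhs: "((\<lambda>t. semigroup \<Lambda> N c r t (opA N ?f) \<eta>)
      \<longlongrightarrow> (\<Sum>k\<le>n. ?coeff k * absorption_law \<eta> k)) at_top"
    using tendsto_semigroup_site0[OF \<eta>] by simp
  have "(1 - z) * (\<Sum>k\<le>n. real k * z ^ (k - 1) * absorption_law \<eta> k) + real n * genfun \<Lambda> N c r \<eta> z
      = (\<Sum>k\<le>n. ?coeff k * absorption_law \<eta> k)"
    unfolding genfun_eq_polynomial[OF \<eta>] sum_distrib_left sum.distrib[symmetric]
  proof (rule sum.cong[OF refl])
    fix k
    show "(1 - z) * (real k * z ^ (k - 1) * absorption_law \<eta> k) + real n * (z ^ k * absorption_law \<eta> k)
        = ?coeff k * absorption_law \<eta> k"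
      by (cases k) (simp_all add: algebra_simps)
  qed
  also have "\<dots> = (\<Sum>x\<in>sites_star N. real (\<eta> x) * genfun \<Lambda> N c r (removeP x \<eta>) z)"
    using tendsto_unique[OF _ to_lhs to_rhs] by simp
  finally show ?thesis .
qed

lemma genfun_integral_representation:
  assumes \<eta>: "\<eta> \<in> Omega_star \<Lambda> N n" and z: "0 \<le> z" "z < 1"
  shows "genfun \<Lambda> N c r \<eta> z = (1 - z) ^ n * genfun \<Lambda> N c r \<eta> 0
    + (1 - z) ^ n * (\<Sum>i\<in>sites_star N. real (\<eta> i) *
        integral {0..z} (\<lambda>u. genfun \<Lambda> N c r (removeP i \<eta>) u / (1 - u) ^ (n + 1)))"
proof -
  let ?G = "\<lambda>i u. genfun \<Lambda> N c r (removeP i \<eta>) u / (1 - u) ^ (n + 1)"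
  have integrable: "?G i integrable_on {0..z}" for i
  proof -
    obtain m where "removeP i \<eta> \<in> Omega_star \<Lambda> N m" using removeP_in_some_Omega_star[OF \<eta>] .
    then have "continuous_on {0..z} (genfun \<Lambda> N c r (removeP i \<eta>))"
      by (simp add: genfun_eq_polynomial continuous_intros)
    then have "continuous_on {0..z} (?G i)"
      using z by (intro continuous_intros) auto
    then show ?thesis by (rule integrable_continuous_interval)
  qed
  have "genfun \<Lambda> N c r \<eta> z = (1 - z) ^ n * genfun \<Lambda> N c r \<eta> 0
      + (1 - z) ^ n * integral {0..z} (\<lambda>u. (\<Sum>i\<in>sites_star N. real (\<eta> i) * genfun \<Lambda> N c r (removeP i \<eta>) u)
          / (1 - u) ^ (n + 1))"
    using z genfun_has_real_derivative[OF \<eta>] genfun_ode[OF \<eta>]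
    by (rule linear_ode_solution_formula)
  also have "integral {0..z} (\<lambda>u. (\<Sum>i\<in>sites_star N. real (\<eta> i) * genfun \<Lambda> N c r (removeP i \<eta>) u)
      / (1 - u) ^ (n + 1)) = integral {0..z} (\<lambda>u. \<Sum>i\<in>sites_star N. real (\<eta> i) * ?G i u)"
    by (simp add: sum_divide_distrib)
  also have "\<dots> = (\<Sum>i\<in>sites_star N. real (\<eta> i) * integral {0..z} (?G i))"
    by (subst integral_sum[OF finite_sites_star], rule integrable_on_mult_right[OF integrable])
      (simp only: integral_mult_right)
  finally show ?thesis .
qed

end

theorem proposition5p8:
  fixes \<Lambda> :: "nat set" and N n :: nat
    and c :: "config \<Rightarrow> config \<Rightarrow> real" and r :: "nat \<Rightarrow> nat \<Rightarrow> real"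
    and \<eta> :: config
  assumes Lambda_down: "\<forall>a\<in>\<Lambda>. \<forall>b\<le>a. b \<in> \<Lambda>"
    and c_nonneg: "\<forall>\<zeta>0 \<zeta>. c \<zeta>0 \<zeta> \<ge> 0"
    and r_nonneg: "\<forall>i\<in>sites_V N. \<forall>j\<in>sites_abs N. r i j \<ge> 0"
    and consistent: "\<forall>f. \<forall>\<xi>\<in>Omega_star_all \<Lambda> N.
        genLabs \<Lambda> N c r (opA N f) \<xi> = opA N (genLabs \<Lambda> N c r f) \<xi>"
    and eta: "\<eta> \<in> Omega_star \<Lambda> N n"
  shows "(\<forall>z::real. z \<ge> 0 \<longrightarrow>
            (\<exists>D. ((\<lambda>u. genfun \<Lambda> N c r \<eta> u) has_real_derivative D) (at z within {0..})
              \<and> (1 - z) * D + real n * genfun \<Lambda> N c r \<eta> z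
                 = (\<Sum>i\<in>sites_star N. real (\<eta> i) * genfun \<Lambda> N c r (removeP i \<eta>) z)))
       \<and> (\<forall>z::real. 0 \<le> z \<and> z < 1 \<longrightarrow>
            genfun \<Lambda> N c r \<eta> z
              = (1 - z) ^ n * genfun \<Lambda> N c r \<eta> 0
                + (1 - z) ^ n * (\<Sum>i\<in>sites_star N. real (\<eta> i) *
                    integral {0..z} (\<lambda>u. genfun \<Lambda> N c r (removeP i \<eta>) u / (1 - u) ^ (n + 1))))"
proof -
  interpret consistent_absorbing_process \<Lambda> N c r
    by unfold_locales (fact Lambda_down c_nonneg r_nonneg consistent)+
  show ?thesis
    using has_field_derivative_at_within[OF genfun_has_real_derivative[OF eta]] genfun_ode[OF eta]
      genfun_integral_representation[OF eta]
    by blast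
qed

end
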